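(* There exist universal constants $C,C'>0$ such that for every $m>0$, every $\beta\in(0,1/3)$, every $\epsilon\in(0,1)$, every odd $n\in\mathbb{N}$ with $n\epsilon\ge C\ln(1/\beta)$, and every $D\in\mathcal{CTM}$, setting $\alpha^*=1/(n\epsilon)$, with probability at least $1-\beta$, $$\mathrm{FAIR}(D,\mathtt{DPExpMed}_{\alpha^*}(D))\le C'\frac{m}{n\epsilon}\ln\frac1\beta.$$
   Context: $V=[-m/2,m/2]$. A dataset is $D=(x_1,\dots,x_n)\in V^n$, indexed so that $x_1\le\dots\le x_n$, with median (optimal location) $\mathcal{T}(D)=x_{\lceil n/2\rceil}$. $\mathrm{FAIR}(D,\ell)=\max_{1\le i\le n}\left(|x_i-\ell|-|x_i-\mathcal{T}(D)|\right)$ (maximum individual utility loss when agent utilities are $-|x_i-\ell|$). $\mathcal{CTM}$ is the set of datasets with $|x_{i+1}-x_i|\ge|x_{j+1}-x_j|$ for all $1\le i<j\le\lceil n/2\rceil-1$ and $|x_i-x_{i-1}|\ge|x_j-x_{j-1}|$ for all $\lceil n/2\rceil+1\le j<i\le n$. The percentile loss $q(D,a)$ for $a\in V$ is: $\min\{|\lceil n/2\rceil-i|: a\in[x_i,\mathcal{T}(D)]\}$ if $a\in[x_1,\mathcal{T}(D)]$; $\min\{|\lceil n/2\rceil-i|: a\in[\mathcal{T}(D),x_i]\}$ if $a\in(\mathcal{T}(D),x_n]$; $\lceil n/2\rceil$ otherwise. The widened loss is $p_\alpha(D,\ell)=\min_{a\in V:|a-\ell|\le\alpha m}q(D,a)$.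 $\mathtt{DPExpMed}_\alpha(D)$ is the random point of $V$ with density proportional to $\exp(-\frac{\epsilon}{2}p_\alpha(D,\ell))$. *)

theory Defs
  imports "HOL-Analysis.Analysis"
begin

text \<open>A dataset of size n is a function x :: nat => real, used on indices 1..n,
  sorted increasingly, with entries in V = [-m/2, m/2].\<close>

definition Vset :: "real \<Rightarrow> real set" where
  "Vset m = {-m/2..m/2}"

definition is_dataset :: "real \<Rightarrow> nat \<Rightarrow> (nat \<Rightarrow> real) \<Rightarrow> bool" where
  "is_dataset m n x \<longleftrightarrow> (\<forall>i\<in>{1..n}. x i \<in> Vset m) \<and>
     (\<forall>i j. 1 \<le> i \<longrightarrow> i \<le> j \<longrightarrow> j \<le> n \<longrightarrow> x i \<le> x j)"

definition midx :: "nat \<Rightarrow> nat" where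
  "midx n = nat \<lceil>real n / 2\<rceil>"

definition Tmed :: "(nat \<Rightarrow> real) \<Rightarrow> nat \<Rightarrow> real" where
  "Tmed x n = x (midx n)"

definition FAIR :: "(nat \<Rightarrow> real) \<Rightarrow> nat \<Rightarrow> real \<Rightarrow> real" where
  "FAIR x n l = Max ((\<lambda>i. \<bar>x i - l\<bar> - \<bar>x i - Tmed x n\<bar>) ` {1..n})"

definition CTM :: "nat \<Rightarrow> (nat \<Rightarrow> real) \<Rightarrow> bool" where
  "CTM n x \<longleftrightarrow>
     (\<forall>i j. 1 \<le> i \<longrightarrow> i < j \<longrightarrow> j \<le> midx n - 1 \<longrightarrow> \<bar>x (i+1) - x i\<bar> \<ge> \<bar>x (j+1) - x j\<bar>) \<and>
     (\<forall>i j. midx n + 1 \<le> j \<longrightarrow> j < i \<longrightarrow> i \<le> n \<longrightarrow> \<bar>x i - x (i-1)\<bar> \<ge> \<bar>x j - x (j-1)\<bar>)"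

definition qloss :: "(nat \<Rightarrow> real) \<Rightarrow> nat \<Rightarrow> real \<Rightarrow> real" where
  "qloss x n a =
    (if x 1 \<le> a \<and> a \<le> Tmed x n then
       Min {\<bar>real (midx n) - real i\<bar> | i. i \<in> {1..n} \<and> x i \<le> a \<and> a \<le> Tmed x n}
     else if Tmed x n < a \<and> a \<le> x n then
       Min {\<bar>real (midx n) - real i\<bar> | i. i \<in> {1..n} \<and> Tmed x n \<le> a \<and> a \<le> x i}
     else real (midx n))"

definition ploss :: "real \<Rightarrow> real \<Rightarrow> (nat \<Rightarrow> real) \<Rightarrow> nat \<Rightarrow> real \<Rightarrow> real" where
  "ploss m \<alpha> x n l = Inf (qloss x n ` {a \<in> Vset m. \<bar>a - l\<bar> \<le> \<alpha> * m})"

definition expmed_measure :: "real \<Rightarrow> real \<Rightarrow> real \<Rightarrow> (nat \<Rightarrow> real) \<Rightarrow> nat \<Rightarrow> real measure" where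
  "expmed_measure m \<alpha> \<epsilon> x n =
     density lborel (\<lambda>l. ennreal (indicator (Vset m) l * exp (- (\<epsilon> / 2) * ploss m \<alpha> x n l)))"

text \<open>Probability that DPExpMed_alpha(D) lies in S.\<close>
definition dpexpmed_prob :: "real \<Rightarrow> real \<Rightarrow> real \<Rightarrow> (nat \<Rightarrow> real) \<Rightarrow> nat \<Rightarrow> real set \<Rightarrow> real" where
  "dpexpmed_prob m \<alpha> \<epsilon> x n S =
     measure (expmed_measure m \<alpha> \<epsilon> x n) S / measure (expmed_measure m \<alpha> \<epsilon> x n) (Vset m)"

end

theory Submission
  imports Defs
begin

text \<open>Write k = midx n and T = Tmed x n. Under CTM the gaps between consecutive data points grow
  away from the median, so on either side the points are a convex function of the rank distance
  from the median; comparing with the chord to x 1 (resp. x n) gives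
  (k - 1) |x i - T| \<le> |k - i| m. Hence the percentile loss grows at least linearly,
  q(D,a) \<ge> (k - 1) |a - T| / m, and the widened loss satisfies
  p(D,l) \<ge> (k - 1) (|l - T| - \<alpha> m) / m, while it vanishes within \<alpha> m of T.
  So the density of the mechanism is 1 on an interval of length \<alpha> m (the normaliser is at least
  \<alpha> m) and is at most exp (- c (|l - T| - \<alpha> m)) with c = \<epsilon> (k - 1) / (2 m) elsewhere.
  Integrating the two exponential tails beyond R = 60 \<alpha> m ln (1 / \<beta>) bounds their mass by
  \<beta> \<alpha> m, and FAIR(D,l) \<le> |l - T| turns this into the fairness guarantee.\<close>

lemma mono_increments_chord_le:
  fixes f :: "nat \<Rightarrow> real"
  assumes mono: "\<And>s s'. s \<le> s' \<Longrightarrow> s' < K \<Longrightarrow> f (Suc s) - f s \<le> f (Suc s') - f s'"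
    and "j \<le> K"
  shows "real K * (f j - f 0) \<le> real j * (f K - f 0)"
proof (cases "j = 0")
  case False
  define g where "g s = f (Suc s) - f s" for s
  have g_mono: "g s \<le> g s'" if "s \<le> s'" "s' < K" for s s'
    using mono that unfolding g_def .
  \<comment> \<open>The mean of the first j increments is at most g (j - 1), the mean of the others at least.\<close>
  define a where "a = g (j - 1)"
  define S where "S = (\<Sum>s<j. g s)"
  define T where "T = (\<Sum>s\<in>{j..<K}. g s)"
  have "S \<le> real j * a"
    using sum_bounded_above[of "{..<j}" g a] g_mono \<open>j \<le> K\<close> by (simp add: S_def a_def)
  have "real (card {j..<K}) * a \<le> T"
    unfolding T_def a_def by (rule sum_bounded_below) (use g_mono in force)
  have "real K * S = real j * S + real (K - j) * S"
    using \<open>j \<le> K\<close> by (simp add: of_nat_diff algebra_simps)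
  also have "\<dots> \<le> real j * S + real (K - j) * (real j * a)"
    using \<open>S \<le> real j * a\<close> by (intro add_left_mono mult_left_mono) auto
  also have "\<dots> = real j * S + real j * (real (K - j) * a)"
    by simp
  also have "\<dots> \<le> real j * S + real j * T"
    using \<open>real (card {j..<K}) * a \<le> T\<close> by (simp add: mult_left_mono)
  also have "\<dots> = real j * (\<Sum>s<K. g s)"
    unfolding S_def T_def atLeast0LessThan[symmetric] using \<open>j \<le> K\<close>
    by (simp add: sum.atLeastLessThan_concat flip: distrib_left)
  finally show ?thesis
    unfolding S_def g_def sum_lessThan_telescope .
qed simp

lemma midx_bounds:
  assumes "n \<ge> 1"
  shows "1 \<le> midx n" "midx n \<le> n" "n \<le> 2 * midx n" "2 * midx n \<le> n + 1"
proof -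
  have "real n / 2 \<le> real (midx n)" "real (midx n) < real n / 2 + 1"
    unfolding midx_def by linarith+
  then show "1 \<le> midx n" "midx n \<le> n" "n \<le> 2 * midx n" "2 * midx n \<le> n + 1"
    using assms by linarith+
qed

lemma odd_midx:
  assumes "odd n" shows "2 * midx n = n + 1"
proof -
  obtain t where t: "n = 2 * t + 1" using assms by (elim oddE)
  have "\<lceil>real n / 2\<rceil> = int t + 1"
    unfolding t by (intro ceiling_unique) auto
  then show ?thesis unfolding midx_def t by simp
qed

lemma dataset_mono: "is_dataset m n x \<Longrightarrow> 1 \<le> i \<Longrightarrow> i \<le> j \<Longrightarrow> j \<le> n \<Longrightarrow> x i \<le> x j"
  unfolding is_dataset_def by blast

lemma dataset_in_Vset: "is_dataset m n x \<Longrightarrow> i \<in> {1..n} \<Longrightarrow> x i \<in> Vset m"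
  unfolding is_dataset_def by blast

lemma Vset_dist: "a \<in> Vset m \<Longrightarrow> b \<in> Vset m \<Longrightarrow> \<bar>a - b\<bar> \<le> m"
  unfolding Vset_def by auto

lemma Tmed_in_Vset: "is_dataset m n x \<Longrightarrow> n \<ge> 1 \<Longrightarrow> Tmed x n \<in> Vset m"
  unfolding Tmed_def using midx_bounds by (auto intro: dataset_in_Vset)

lemma dataset_spread:
  "is_dataset m n x \<Longrightarrow> 1 \<le> i \<Longrightarrow> i \<le> j \<Longrightarrow> j \<le> n \<Longrightarrow> x j - x i \<le> m"
  using Vset_dist[of "x j" m "x i"] dataset_in_Vset[of m n x] by auto

lemma CTM_left_chord:
  assumes ds: "is_dataset m n x" and ctm: "CTM n x" and n: "n \<ge> 1" and j: "j < midx n"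
  shows "real (midx n - 1) * (Tmed x n - x (midx n - j)) \<le> real j * m"
proof -
  define k where "k = midx n"
  have k: "1 \<le> k" "k \<le> n" using midx_bounds[OF n] by (simp_all add: k_def)
  define f where "f s = - x (k - s)" for s
  have "f (Suc s) - f s \<le> f (Suc s') - f s'" if "s \<le> s'" "s' < k - 1" for s s'
  proof (cases "s = s'")
    case False
    have "1 \<le> k - Suc s'" "k - Suc s' < k - Suc s" "k - Suc s \<le> k - 1"
      using that False by auto
    then have "\<bar>x (k - Suc s + 1) - x (k - Suc s)\<bar> \<le> \<bar>x (k - Suc s' + 1) - x (k - Suc s')\<bar>"
      using ctm unfolding CTM_def k_def by blast
    moreover have "k - Suc s + 1 = k - s" "k - Suc s' + 1 = k - s'"
      using that by auto
    moreover have "x (k - Suc s) \<le> x (k - s)" "x (k - Suc s') \<le> x (k - s')"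
      using that k by (auto intro!: dataset_mono[OF ds])
    ultimately show ?thesis unfolding f_def by simp
  qed simp
  then have chord: "real (k - 1) * (f j - f 0) \<le> real j * (f (k - 1) - f 0)"
    using j by (intro mono_increments_chord_le) (auto simp: k_def)
  have "f (k - 1) - f 0 \<le> m"
    using dataset_spread[OF ds, of 1 k] k by (simp add: f_def)
  then have "real j * (f (k - 1) - f 0) \<le> real j * m"
    by (rule mult_left_mono) simp
  with chord show ?thesis
    by (simp add: f_def Tmed_def k_def)
qed

lemma CTM_right_chord:
  assumes ds: "is_dataset m n x" and ctm: "CTM n x" and n: "n \<ge> 1" and j: "j \<le> n - midx n"
  shows "real (n - midx n) * (x (midx n + j) - Tmed x n) \<le> real j * m"
proof -
  define k where "k = midx n"
  have k: "1 \<le> k" "k \<le> n" using midx_bounds[OF n] by (simp_all add: k_def)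
  define f where "f s = x (k + s)" for s
  have "f (Suc s) - f s \<le> f (Suc s') - f s'" if "s \<le> s'" "s' < n - k" for s s'
  proof (cases "s = s'")
    case False
    have "k + 1 \<le> k + Suc s" "k + Suc s < k + Suc s'" "k + Suc s' \<le> n"
      using that False by auto
    then have "\<bar>x (k + Suc s) - x (k + Suc s - 1)\<bar> \<le> \<bar>x (k + Suc s') - x (k + Suc s' - 1)\<bar>"
      using ctm unfolding CTM_def k_def by blast
    moreover have "x (k + s) \<le> x (k + Suc s)" "x (k + s') \<le> x (k + Suc s')"
      using that k by (auto intro!: dataset_mono[OF ds])
    ultimately show ?thesis unfolding f_def by simp
  qed simp
  then have chord: "real (n - k) * (f j - f 0) \<le> real j * (f (n - k) - f 0)"
    using j by (intro mono_increments_chord_le) (auto simp: k_def)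
  have "f (n - k) - f 0 \<le> m"
    using dataset_spread[OF ds, of k n] k by (simp add: f_def)
  then have "real j * (f (n - k) - f 0) \<le> real j * m"
    by (rule mult_left_mono) simp
  with chord show ?thesis
    by (simp add: f_def Tmed_def k_def)
qed

definition rank_gap :: "nat \<Rightarrow> nat \<Rightarrow> real" where
  "rank_gap n i = \<bar>real (midx n) - real i\<bar>"

lemma CTM_median_dist_le:
  assumes ds: "is_dataset m n x" and ctm: "CTM n x" and n: "n \<ge> 1" and i: "i \<in> {1..n}"
  shows "real (midx n - 1) * \<bar>x i - Tmed x n\<bar> \<le> rank_gap n i * m"
proof (cases "i \<le> midx n")
  case True
  have "real (midx n - 1) * (Tmed x n - x (midx n - (midx n - i))) \<le> real (midx n - i) * m"
    using i True by (intro CTM_left_chord[OF ds ctm n]) auto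
  moreover have "x i \<le> Tmed x n"
    using i True midx_bounds[OF n] unfolding Tmed_def by (auto intro: dataset_mono[OF ds])
  ultimately show ?thesis using True by (simp add: rank_gap_def of_nat_diff)
next
  case False
  have "Tmed x n \<le> x i"
    using i False midx_bounds[OF n] unfolding Tmed_def by (auto intro: dataset_mono[OF ds])
  have "real (midx n - 1) * (x i - Tmed x n) \<le> real (n - midx n) * (x i - Tmed x n)"
    using midx_bounds[OF n] \<open>Tmed x n \<le> x i\<close> by (intro mult_right_mono) auto
  also have "\<dots> \<le> real (i - midx n) * m"
    using CTM_right_chord[OF ds ctm n, of "i - midx n"] i False by simp
  finally show ?thesis using False \<open>Tmed x n \<le> x i\<close> by (simp add: rank_gap_def of_nat_diff)
qed

lemma Min_eq_Min_if_dominated: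
  fixes A B :: "'a :: linorder set"
  assumes "finite B" "A \<noteq> {}" "A \<subseteq> B" "\<And>b. b \<in> B \<Longrightarrow> \<exists>a\<in>A. a \<le> b"
  shows "Min A = Min B"
proof (rule antisym)
  have "finite A" using assms(1,3) by (rule finite_subset[rotated])
  obtain a where "a \<in> A" "a \<le> Min B"
    using assms Min_in[of B] by blast
  then show "Min A \<le> Min B" using \<open>finite A\<close> by (meson Min_le order_trans)
  show "Min B \<le> Min A" using assms(3,2,1) by (rule Min_antimono)
qed

definition covering_idx :: "(nat \<Rightarrow> real) \<Rightarrow> nat \<Rightarrow> real \<Rightarrow> nat set" where
  "covering_idx x n a = {i \<in> {1..n}. x i \<le> a \<and> a \<le> Tmed x n \<or> Tmed x n \<le> a \<and> a \<le> x i}"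

lemma qloss_eq_Min_left:
  assumes ds: "is_dataset m n x" and n: "n \<ge> 1" and a: "x 1 \<le> a" "a \<le> Tmed x n"
  shows "qloss x n a = Min (insert (real (midx n)) (rank_gap n ` covering_idx x n a))"
proof -
  define B where "B = {i \<in> {1..n}. x i \<le> a}"
  have k: "1 \<le> midx n" "midx n \<le> n" using midx_bounds[OF n] by simp_all
  have "1 \<in> B" using a n by (simp add: B_def)
  have "qloss x n a = Min (rank_gap n ` B)"
    using a unfolding qloss_def B_def rank_gap_def by (auto intro!: arg_cong[where f = Min])
  also have "\<dots> = Min (insert (real (midx n)) (rank_gap n ` covering_idx x n a))"
  proof (rule Min_eq_Min_if_dominated)
    show "finite (insert (real (midx n)) (rank_gap n ` covering_idx x n a))"
      by (simp add: covering_idx_def)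
    show "rank_gap n ` B \<noteq> {}" using \<open>1 \<in> B\<close> by blast
    show "rank_gap n ` B \<subseteq> insert (real (midx n)) (rank_gap n ` covering_idx x n a)"
      using a unfolding B_def covering_idx_def by blast
    fix b assume b: "b \<in> insert (real (midx n)) (rank_gap n ` covering_idx x n a)"
    show "\<exists>c\<in>rank_gap n ` B. c \<le> b"
    proof (cases "b = real (midx n)")
      case True
      then have "rank_gap n 1 \<le> b" using k by (simp add: rank_gap_def)
      then show ?thesis using \<open>1 \<in> B\<close> by blast
    next
      case False
      then obtain i where i: "i \<in> covering_idx x n a" "b = rank_gap n i" using b by auto
      show ?thesis
      proof (cases "i \<in> B")
        case False
        then have "a = Tmed x n" using i a by (auto simp: covering_idx_def B_def)
        then have "midx n \<in> B" using k by (simp add: B_def Tmed_def)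
        moreover have "rank_gap n (midx n) \<le> b" using i by (simp add: rank_gap_def)
        ultimately show ?thesis by blast
      qed (use i in auto)
    qed
  qed
  finally show ?thesis .
qed

lemma qloss_eq_Min_right:
  assumes ds: "is_dataset m n x" and n: "n \<ge> 1" and a: "Tmed x n < a" "a \<le> x n"
  shows "qloss x n a = Min (insert (real (midx n)) (rank_gap n ` covering_idx x n a))"
proof -
  have cov: "covering_idx x n a = {i \<in> {1..n}. a \<le> x i}"
    using a unfolding covering_idx_def by auto
  have "n \<in> covering_idx x n a" using a n by (simp add: cov)
  have "x 1 \<le> Tmed x n"
    using midx_bounds[OF n] unfolding Tmed_def by (auto intro: dataset_mono[OF ds])
  then have "qloss x n a = Min (rank_gap n ` covering_idx x n a)"
    using a unfolding cov qloss_def rank_gap_def by (auto intro!: arg_cong[where f = Min])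
  also have "\<dots> = Min (insert (real (midx n)) (rank_gap n ` covering_idx x n a))"
  proof (rule Min_eq_Min_if_dominated)
    have "rank_gap n n \<le> real (midx n)" using midx_bounds[OF n] by (simp add: rank_gap_def)
    then show "\<And>b. b \<in> insert (real (midx n)) (rank_gap n ` covering_idx x n a) \<Longrightarrow>
        \<exists>c\<in>rank_gap n ` covering_idx x n a. c \<le> b"
      using \<open>n \<in> covering_idx x n a\<close> by blast
  qed (use \<open>n \<in> covering_idx x n a\<close> in \<open>auto simp: covering_idx_def\<close>)
  finally show ?thesis .
qed

lemma qloss_eq_Min:
  assumes ds: "is_dataset m n x" and n: "n \<ge> 1"
  shows "qloss x n a = Min (insert (real (midx n)) (rank_gap n ` covering_idx x n a))"
proof -
  have range: "x 1 \<le> x i \<and> x i \<le> x n" if "i \<in> {1..n}" for i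
    using that by (auto intro: dataset_mono[OF ds])
  then have T: "x 1 \<le> Tmed x n" "Tmed x n \<le> x n"
    using midx_bounds[OF n] unfolding Tmed_def by auto
  consider "x 1 \<le> a \<and> a \<le> Tmed x n" | "Tmed x n < a \<and> a \<le> x n" | "a < x 1 \<or> x n < a"
    using T by linarith
  then show ?thesis
  proof cases
    case 3
    then have "covering_idx x n a = {}"
      using range T unfolding covering_idx_def by fastforce
    moreover have "qloss x n a = real (midx n)"
      using 3 T unfolding qloss_def by auto
    ultimately show ?thesis by simp
  qed (auto intro: qloss_eq_Min_left[OF ds n] qloss_eq_Min_right[OF ds n])
qed

lemma qloss_le_iff:
  assumes ds: "is_dataset m n x" and n: "n \<ge> 1"
  shows "qloss x n a \<le> t \<longleftrightarrow> real (midx n) \<le> t \<or> (\<exists>i\<in>covering_idx x n a. rank_gap n i \<le> t)"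
  by (subst qloss_eq_Min[OF ds n], subst Min_le_iff) (auto simp: covering_idx_def)

lemma qloss_in_range:
  assumes ds: "is_dataset m n x" and n: "n \<ge> 1"
  shows "qloss x n a \<in> rank_gap n ` {..n}"
proof -
  have "real (midx n) = rank_gap n 0" by (simp add: rank_gap_def)
  then have "insert (real (midx n)) (rank_gap n ` covering_idx x n a) \<subseteq> rank_gap n ` {..n}"
    by (auto simp: covering_idx_def)
  moreover have "qloss x n a \<in> insert (real (midx n)) (rank_gap n ` covering_idx x n a)"
    unfolding qloss_eq_Min[OF ds n] by (rule Min_in) (auto simp: covering_idx_def)
  ultimately show ?thesis by blast
qed

lemma qloss_nonneg:
  assumes "is_dataset m n x" "n \<ge> 1" shows "0 \<le> qloss x n a"
  using qloss_in_range[OF assms, of a] by (auto simp: rank_gap_def)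

lemma qloss_Tmed:
  assumes ds: "is_dataset m n x" and n: "n \<ge> 1"
  shows "qloss x n (Tmed x n) = 0"
proof -
  have "midx n \<in> covering_idx x n (Tmed x n)"
    using midx_bounds[OF n] by (simp add: covering_idx_def Tmed_def)
  then have "qloss x n (Tmed x n) \<le> 0" by (force simp: qloss_le_iff[OF ds n] rank_gap_def)
  then show ?thesis using qloss_nonneg[OF ds n] by (meson antisym)
qed

lemma closed_qloss_sublevel:
  assumes ds: "is_dataset m n x" and n: "n \<ge> 1"
  shows "closed {a. qloss x n a \<le> t}"
proof -
  have "{a. qloss x n a \<le> t} = {a. real (midx n) \<le> t} \<union>
     (\<Union>i\<in>{i\<in>{1..n}. rank_gap n i \<le> t}. {x i..Tmed x n} \<union> {Tmed x n..x i})"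
    by (auto simp: qloss_le_iff[OF ds n] covering_idx_def)
  moreover have "closed {a::real. real (midx n) \<le> t}"
    by (cases "real (midx n) \<le> t") auto
  ultimately show ?thesis by (auto intro!: closed_Un closed_UN)
qed

lemma CTM_qloss_lower:
  assumes ds: "is_dataset m n x" and ctm: "CTM n x" and n: "n \<ge> 1" and a: "a \<in> Vset m"
  shows "real (midx n - 1) * \<bar>a - Tmed x n\<bar> \<le> qloss x n a * m"
proof -
  have m: "m \<ge> 0" and aT: "\<bar>a - Tmed x n\<bar> \<le> m"
    using a Vset_dist[OF a Tmed_in_Vset[OF ds n]] unfolding Vset_def by auto
  consider "real (midx n) \<le> qloss x n a"
    | i where "i \<in> covering_idx x n a" "rank_gap n i \<le> qloss x n a"
    using qloss_le_iff[OF ds n, of a "qloss x n a"] by auto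
  then show ?thesis
  proof cases
    case 1
    have "real (midx n - 1) * \<bar>a - Tmed x n\<bar> \<le> real (midx n) * m"
      using aT m by (intro mult_mono) auto
    also have "\<dots> \<le> qloss x n a * m" using 1 m by (rule mult_right_mono)
    finally show ?thesis .
  next
    case (2 i)
    then have i: "i \<in> {1..n}" and "\<bar>a - Tmed x n\<bar> \<le> \<bar>x i - Tmed x n\<bar>"
      by (auto simp: covering_idx_def)
    then have "real (midx n - 1) * \<bar>a - Tmed x n\<bar> \<le> real (midx n - 1) * \<bar>x i - Tmed x n\<bar>"
      by (intro mult_left_mono) auto
    also have "\<dots> \<le> rank_gap n i * m" by (rule CTM_median_dist_le[OF ds ctm n i])
    also have "\<dots> \<le> qloss x n a * m" using 2 m by (intro mult_right_mono)
    finally show ?thesis .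
  qed
qed

lemma ploss_eq_Min:
  assumes ds: "is_dataset m n x" and n: "n \<ge> 1" and l: "l \<in> Vset m" and r: "0 \<le> \<alpha> * m"
  shows "ploss m \<alpha> x n l = Min (qloss x n ` {a \<in> Vset m. \<bar>a - l\<bar> \<le> \<alpha> * m})"
    and "finite (qloss x n ` {a \<in> Vset m. \<bar>a - l\<bar> \<le> \<alpha> * m})"
    and "qloss x n ` {a \<in> Vset m. \<bar>a - l\<bar> \<le> \<alpha> * m} \<noteq> {}"
proof -
  show fin: "finite (qloss x n ` {a \<in> Vset m. \<bar>a - l\<bar> \<le> \<alpha> * m})"
    by (rule finite_subset[of _ "rank_gap n ` {..n}"])
      (use qloss_in_range[OF ds n] in auto)
  show ne: "qloss x n ` {a \<in> Vset m. \<bar>a - l\<bar> \<le> \<alpha> * m} \<noteq> {}"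
    using l r by auto
  show "ploss m \<alpha> x n l = Min (qloss x n ` {a \<in> Vset m. \<bar>a - l\<bar> \<le> \<alpha> * m})"
    unfolding ploss_def using fin ne by (rule cInf_eq_Min)
qed

lemma ploss_attained:
  assumes "is_dataset m n x" "n \<ge> 1" "l \<in> Vset m" "0 \<le> \<alpha> * m"
  obtains a where "a \<in> Vset m" "\<bar>a - l\<bar> \<le> \<alpha> * m" "ploss m \<alpha> x n l = qloss x n a"
  using Min_in[OF ploss_eq_Min(2,3)[OF assms]] ploss_eq_Min(1)[OF assms] by auto

lemma ploss_le_iff:
  assumes "is_dataset m n x" "n \<ge> 1" "l \<in> Vset m" "0 \<le> \<alpha> * m"
  shows "ploss m \<alpha> x n l \<le> t \<longleftrightarrow> (\<exists>a\<in>Vset m. \<bar>a - l\<bar> \<le> \<alpha> * m \<and> qloss x n a \<le> t)"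
  unfolding ploss_eq_Min(1)[OF assms] Min_le_iff[OF ploss_eq_Min(2,3)[OF assms]] by blast

lemma ploss_nonneg:
  assumes "is_dataset m n x" "n \<ge> 1" "l \<in> Vset m" "0 \<le> \<alpha> * m"
  shows "0 \<le> ploss m \<alpha> x n l"
  using ploss_attained[OF assms] qloss_nonneg[OF assms(1,2)] by metis

lemma ploss_near_median:
  assumes ds: "is_dataset m n x" and n: "n \<ge> 1" and l: "l \<in> Vset m" and r: "0 \<le> \<alpha> * m"
    and near: "\<bar>l - Tmed x n\<bar> \<le> \<alpha> * m"
  shows "ploss m \<alpha> x n l = 0"
proof -
  have "ploss m \<alpha> x n l \<le> 0"
    using Tmed_in_Vset[OF ds n] near qloss_Tmed[OF ds n]
    by (subst ploss_le_iff[OF ds n l r]) (auto intro!: bexI[of _ "Tmed x n"])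
  then show ?thesis using ploss_nonneg[OF ds n l r] by linarith
qed

lemma CTM_ploss_lower:
  assumes ds: "is_dataset m n x" and ctm: "CTM n x" and n: "n \<ge> 1" and l: "l \<in> Vset m"
    and r: "0 \<le> \<alpha> * m"
  shows "real (midx n - 1) * (\<bar>l - Tmed x n\<bar> - \<alpha> * m) \<le> ploss m \<alpha> x n l * m"
proof -
  obtain a where a: "a \<in> Vset m" "\<bar>a - l\<bar> \<le> \<alpha> * m" "ploss m \<alpha> x n l = qloss x n a"
    using ploss_attained[OF ds n l r] .
  have "real (midx n - 1) * (\<bar>l - Tmed x n\<bar> - \<alpha> * m) \<le> real (midx n - 1) * \<bar>a - Tmed x n\<bar>"
    using a(2) by (intro mult_left_mono) auto
  also have "\<dots> \<le> ploss m \<alpha> x n l * m"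
    unfolding a(3) by (rule CTM_qloss_lower[OF ds ctm n a(1)])
  finally show ?thesis .
qed

lemma closed_neighbourhood:
  fixes A :: "real set"
  assumes "compact A"
  shows "closed {l. \<exists>a\<in>A. \<bar>a - l\<bar> \<le> r}"
proof -
  have eq: "{l. \<exists>a\<in>A. \<bar>a - l\<bar> \<le> r} = {a + u | a u. a \<in> A \<and> u \<in> cball 0 r}"
  proof (intro set_eqI iffI)
    fix l assume "l \<in> {l. \<exists>a\<in>A. \<bar>a - l\<bar> \<le> r}"
    then obtain a where "a \<in> A" "\<bar>a - l\<bar> \<le> r" by blast
    then show "l \<in> {a + u | a u. a \<in> A \<and> u \<in> cball 0 r}"
      by (intro CollectI exI[of _ a] exI[of _ "l - a"]) (auto simp: dist_real_def)
  next
    fix l assume "l \<in> {a + u | a u. a \<in> A \<and> u \<in> cball 0 r}"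
    then obtain a u where "a \<in> A" "\<bar>u\<bar> \<le> r" "l = a + u" by (auto simp: dist_real_def)
    then show "l \<in> {l. \<exists>a\<in>A. \<bar>a - l\<bar> \<le> r}" by force
  qed
  have "compact {a + u | a u. a \<in> A \<and> u \<in> cball 0 r}"
    by (rule compact_sums[OF assms compact_cball])
  then show ?thesis unfolding eq by (rule compact_imp_closed)
qed

text \<open>Only on V: for l far outside V the window {a \<in> V. |a - l| \<le> \<alpha> m} is empty and
  ploss is the junk value Inf {}.\<close>

lemma ploss_measurable:
  assumes ds: "is_dataset m n x" and n: "n \<ge> 1" and r: "0 \<le> \<alpha> * m"
  shows "ploss m \<alpha> x n \<in> borel_measurable (restrict_space borel (Vset m))"
  unfolding borel_measurable_iff_le
proof
  fix t
  have "compact (Vset m \<inter> {a. qloss x n a \<le> t})"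
    unfolding Vset_def by (intro compact_Int_closed compact_Icc closed_qloss_sublevel[OF ds n])
  then have "closed {l. \<exists>a\<in>Vset m \<inter> {a. qloss x n a \<le> t}. \<bar>a - l\<bar> \<le> \<alpha> * m}"
    by (rule closed_neighbourhood)
  moreover have "{l \<in> space (restrict_space borel (Vset m)). ploss m \<alpha> x n l \<le> t} =
      Vset m \<inter> {l. \<exists>a\<in>Vset m \<inter> {a. qloss x n a \<le> t}. \<bar>a - l\<bar> \<le> \<alpha> * m}"
    by (auto simp: space_restrict_space ploss_le_iff[OF ds n _ r])
  ultimately show "{l \<in> space (restrict_space borel (Vset m)). ploss m \<alpha> x n l \<le> t}
      \<in> sets (restrict_space borel (Vset m))"
    by (auto simp: sets_restrict_space_iff Vset_def)
qed

definition expmed_density :: "real \<Rightarrow> real \<Rightarrow> real \<Rightarrow> (nat \<Rightarrow> real) \<Rightarrow> nat \<Rightarrow> real \<Rightarrow> real" where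
  "expmed_density m \<alpha> \<epsilon> x n l = indicator (Vset m) l * exp (- (\<epsilon> / 2) * ploss m \<alpha> x n l)"

lemma expmed_measure_eq_density:
  "expmed_measure m \<alpha> \<epsilon> x n = density lborel (\<lambda>l. ennreal (expmed_density m \<alpha> \<epsilon> x n l))"
  by (simp add: expmed_measure_def expmed_density_def)

lemma expmed_density_measurable:
  assumes "is_dataset m n x" "n \<ge> 1" "0 \<le> \<alpha> * m"
  shows "expmed_density m \<alpha> \<epsilon> x n \<in> borel_measurable borel"
proof -
  have "(\<lambda>l. exp (- (\<epsilon> / 2) * ploss m \<alpha> x n l)) \<in> borel_measurable (restrict_space borel (Vset m))"
    using ploss_measurable[OF assms] by measurable
  then show ?thesis
    unfolding expmed_density_def
    by (subst (asm) borel_measurable_restrict_space_iff) (auto simp: Vset_def)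
qed

lemma emeasure_expmed_measure:
  assumes "is_dataset m n x" "n \<ge> 1" "0 \<le> \<alpha> * m" "A \<in> sets borel"
  shows "emeasure (expmed_measure m \<alpha> \<epsilon> x n) A =
    (\<integral>\<^sup>+ l. ennreal (expmed_density m \<alpha> \<epsilon> x n l) * indicator A l \<partial>lborel)"
  unfolding expmed_measure_eq_density
  using expmed_density_measurable[OF assms(1-3)] assms(4) by (subst emeasure_density) auto

lemma expmed_density_le_indicator:
  assumes "is_dataset m n x" "n \<ge> 1" "0 \<le> \<alpha> * m" "0 \<le> \<epsilon>"
  shows "expmed_density m \<alpha> \<epsilon> x n l \<le> indicator (Vset m) l"
  using ploss_nonneg[OF assms(1-2) _ assms(3), of l] assms(4)
  by (auto simp: expmed_density_def indicator_def mult_nonneg_nonneg)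

lemma expmed_density_near_median:
  assumes "is_dataset m n x" "n \<ge> 1" "l \<in> Vset m" "0 \<le> \<alpha> * m" "\<bar>l - Tmed x n\<bar> \<le> \<alpha> * m"
  shows "expmed_density m \<alpha> \<epsilon> x n l = 1"
  using ploss_near_median[OF assms] assms(3) by (simp add: expmed_density_def)

lemma CTM_expmed_density_le:
  assumes ds: "is_dataset m n x" and ctm: "CTM n x" and n: "n \<ge> 1" and m: "0 < m"
    and \<epsilon>: "0 \<le> \<epsilon>" and r: "0 \<le> \<alpha> * m" and l: "l \<in> Vset m"
  shows "expmed_density m \<alpha> \<epsilon> x n l
    \<le> exp (- (\<epsilon> * real (midx n - 1) / (2 * m)) * (\<bar>l - Tmed x n\<bar> - \<alpha> * m))"
proof -
  have "\<epsilon> / (2 * m) * (real (midx n - 1) * (\<bar>l - Tmed x n\<bar> - \<alpha> * m))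
      \<le> \<epsilon> / (2 * m) * (ploss m \<alpha> x n l * m)"
    using CTM_ploss_lower[OF ds ctm n l r] \<epsilon> m by (intro mult_left_mono) auto
  then show ?thesis
    using l m by (simp add: expmed_density_def field_simps)
qed

lemma finite_measure_expmed_measure:
  assumes "is_dataset m n x" "n \<ge> 1" "0 \<le> \<alpha> * m" "0 \<le> \<epsilon>"
  shows "finite_measure (expmed_measure m \<alpha> \<epsilon> x n)"
proof (rule finite_measureI)
  have "emeasure (expmed_measure m \<alpha> \<epsilon> x n) UNIV
      = (\<integral>\<^sup>+ l. ennreal (expmed_density m \<alpha> \<epsilon> x n l) \<partial>lborel)"
    using emeasure_expmed_measure[OF assms(1-3), of UNIV] by simp
  also have "\<dots> \<le> (\<integral>\<^sup>+ l. indicator (Vset m) l \<partial>lborel)"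
    using expmed_density_le_indicator[OF assms]
    by (intro nn_integral_mono) (metis ennreal_indicator ennreal_leI)
  also have "\<dots> < \<infinity>" by (simp add: Vset_def emeasure_lborel_Icc_eq)
  finally show "emeasure (expmed_measure m \<alpha> \<epsilon> x n) (space (expmed_measure m \<alpha> \<epsilon> x n)) \<noteq> \<infinity>"
    by (simp add: expmed_measure_def)
qed

lemma expmed_measure_Vset_ge:
  assumes ds: "is_dataset m n x" and n: "n \<ge> 1" and r: "0 \<le> \<alpha> * m" "\<alpha> * m \<le> m / 2"
    and \<epsilon>: "0 \<le> \<epsilon>"
  shows "\<alpha> * m \<le> measure (expmed_measure m \<alpha> \<epsilon> x n) (Vset m)"
proof -
  interpret finite_measure "expmed_measure m \<alpha> \<epsilon> x n"
    by (rule finite_measure_expmed_measure[OF ds n r(1) \<epsilon>])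
  define T where "T = Tmed x n"
  have T: "- (m / 2) \<le> T" "T \<le> m / 2"
    using Tmed_in_Vset[OF ds n] unfolding T_def Vset_def by auto
  \<comment> \<open>I extends from T towards the centre of V, so it stays inside V as \<alpha> * m \<le> m / 2.\<close>
  define I where "I = (if 0 \<le> T then {T - \<alpha> * m..T} else {T..T + \<alpha> * m})"
  have I: "I \<subseteq> Vset m" "\<And>l. l \<in> I \<Longrightarrow> \<bar>l - T\<bar> \<le> \<alpha> * m"
    using T r by (auto simp: I_def Vset_def split: if_splits)
  have ind_I: "indicator I l \<le> ennreal (expmed_density m \<alpha> \<epsilon> x n l) * indicator (Vset m) l" for l
    using I expmed_density_near_median[OF ds n _ r(1), of l \<epsilon>] unfolding T_def
    by (cases "l \<in> I") auto
  have "ennreal (\<alpha> * m) = (\<integral>\<^sup>+ l. indicator I l \<partial>lborel)"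
    using r by (simp add: I_def)
  also have "\<dots> \<le> (\<integral>\<^sup>+ l. ennreal (expmed_density m \<alpha> \<epsilon> x n l) * indicator (Vset m) l \<partial>lborel)"
    using ind_I by (rule nn_integral_mono)
  also have "\<dots> = ennreal (measure (expmed_measure m \<alpha> \<epsilon> x n) (Vset m))"
    by (simp add: emeasure_expmed_measure[OF ds n r(1)] Vset_def flip: emeasure_eq_measure)
  finally show ?thesis by (simp add: ennreal_le_iff)
qed

lemma nn_integral_exp_affine_Icc:
  fixes a b c s :: real
  assumes "c \<noteq> 0" "a \<le> b"
  shows "(\<integral>\<^sup>+ l. ennreal (indicator {a..b} l * exp (c * (l - s))) \<partial>lborel)
    = ennreal ((exp (c * (b - s)) - exp (c * (a - s))) / c)"
proof -
  define F where "F l = exp (c * (l - s)) / c" for l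
  have "((\<lambda>l. exp (c * (l - s))) has_integral (F b - F a)) {a..b}"
  proof (rule fundamental_theorem_of_calculus[OF \<open>a \<le> b\<close>])
    fix l
    have "(F has_real_derivative exp (c * (l - s))) (at l within {a..b})"
      unfolding F_def using assms(1) by (auto intro!: derivative_eq_intros)
    then show "(F has_vector_derivative exp (c * (l - s))) (at l within {a..b})"
      by (simp add: has_real_derivative_iff_has_vector_derivative)
  qed
  then show ?thesis
    by (subst nn_integral_has_integral_lebesgue) (auto simp: F_def diff_divide_distrib)
qed

lemma nn_integral_exp_two_sided_tail_le:
  fixes c R w T r :: real
  assumes c: "0 < c" and "R \<le> w"
  shows "(\<integral>\<^sup>+ l. ennreal (indicator {l. R \<le> \<bar>l - T\<bar> \<and> \<bar>l - T\<bar> \<le> w} l * exp (- c * (\<bar>l - T\<bar> - r)))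
      \<partial>lborel) \<le> ennreal (2 * exp (- c * (R - r)) / c)"
proof -
  define g1 where "g1 l = indicator {T + R..T + w} l * exp ((- c) * (l - (T + r)))" for l
  define g2 where "g2 l = indicator {T - w..T - R} l * exp (c * (l - (T - r)))" for l
  have split: "ennreal (indicator {l. R \<le> \<bar>l - T\<bar> \<and> \<bar>l - T\<bar> \<le> w} l * exp (- c * (\<bar>l - T\<bar> - r)))
      \<le> ennreal (g1 l) + ennreal (g2 l)" for l
    by (cases "T \<le> l") (auto simp: g1_def g2_def indicator_def algebra_simps)
  have "(\<integral>\<^sup>+ l. ennreal (g1 l) \<partial>lborel) = ennreal ((exp (- c * (R - r)) - exp (- c * (w - r))) / c)"
    using c \<open>R \<le> w\<close> unfolding g1_def
    by (subst nn_integral_exp_affine_Icc) (auto simp: field_simps)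
  also have "\<dots> \<le> ennreal (exp (- c * (R - r)) / c)"
    using c by (intro ennreal_leI divide_right_mono) auto
  finally have int_g1: "(\<integral>\<^sup>+ l. ennreal (g1 l) \<partial>lborel) \<le> ennreal (exp (- c * (R - r)) / c)" .
  have "(\<integral>\<^sup>+ l. ennreal (g2 l) \<partial>lborel) = ennreal ((exp (- c * (R - r)) - exp (- c * (w - r))) / c)"
    using c \<open>R \<le> w\<close> unfolding g2_def
    by (subst nn_integral_exp_affine_Icc) (auto simp: field_simps)
  also have "\<dots> \<le> ennreal (exp (- c * (R - r)) / c)"
    using c by (intro ennreal_leI divide_right_mono) auto
  finally have int_g2: "(\<integral>\<^sup>+ l. ennreal (g2 l) \<partial>lborel) \<le> ennreal (exp (- c * (R - r)) / c)" .
  have "(\<integral>\<^sup>+ l. ennreal (indicator {l. R \<le> \<bar>l - T\<bar> \<and> \<bar>l - T\<bar> \<le> w} l * exp (- c * (\<bar>l - T\<bar> - r)))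
      \<partial>lborel) \<le> (\<integral>\<^sup>+ l. ennreal (g1 l) + ennreal (g2 l) \<partial>lborel)"
    using split by (rule nn_integral_mono)
  also have "\<dots> = (\<integral>\<^sup>+ l. ennreal (g1 l) \<partial>lborel) + (\<integral>\<^sup>+ l. ennreal (g2 l) \<partial>lborel)"
    unfolding g1_def g2_def by (intro nn_integral_add) auto
  also have "\<dots> \<le> ennreal (exp (- c * (R - r)) / c) + ennreal (exp (- c * (R - r)) / c)"
    using int_g1 int_g2 by (rule add_mono)
  also have "\<dots> = ennreal (2 * exp (- c * (R - r)) / c)"
    using c by (simp flip: ennreal_plus)
  finally show ?thesis .
qed

lemma Vset_far_borel: "{l \<in> Vset m. R < \<bar>l - T\<bar>} \<in> sets borel"
  unfolding Vset_def by measurable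

lemma CTM_expmed_measure_far_le:
  assumes ds: "is_dataset m n x" and ctm: "CTM n x" and n: "n \<ge> 1" and m: "0 < m"
    and \<epsilon>: "0 < \<epsilon>" and k: "2 \<le> midx n" and r: "0 \<le> \<alpha> * m"
  defines "c \<equiv> \<epsilon> * real (midx n - 1) / (2 * m)"
  shows "measure (expmed_measure m \<alpha> \<epsilon> x n) {l \<in> Vset m. R < \<bar>l - Tmed x n\<bar>}
    \<le> 2 * exp (- c * (R - \<alpha> * m)) / c"
proof -
  interpret finite_measure "expmed_measure m \<alpha> \<epsilon> x n"
    using finite_measure_expmed_measure[OF ds n r] \<epsilon> by simp
  define T where "T = Tmed x n"
  define far where "far = {l \<in> Vset m. R < \<bar>l - T\<bar>}"
  have c: "0 < c" unfolding c_def using \<epsilon> m k by simp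
  have far_borel: "far \<in> sets borel" unfolding far_def by (rule Vset_far_borel)
  have "ennreal (expmed_density m \<alpha> \<epsilon> x n l) * indicator far l
      \<le> ennreal (indicator {l. R \<le> \<bar>l - T\<bar> \<and> \<bar>l - T\<bar> \<le> max R m} l * exp (- c * (\<bar>l - T\<bar> - \<alpha> * m)))"
    for l
  proof (cases "l \<in> far")
    case True
    then have "l \<in> Vset m" "R < \<bar>l - T\<bar>" by (auto simp: far_def)
    moreover have "\<bar>l - T\<bar> \<le> m"
      using Vset_dist[OF \<open>l \<in> Vset m\<close> Tmed_in_Vset[OF ds n]] by (simp add: T_def)
    ultimately show ?thesis
      using CTM_expmed_density_le[OF ds ctm n m less_imp_le[OF \<epsilon>] r, of l] True
      by (auto simp: T_def c_def intro: ennreal_leI)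
  qed simp
  then have "emeasure (expmed_measure m \<alpha> \<epsilon> x n) far
      \<le> (\<integral>\<^sup>+ l. ennreal (indicator {l. R \<le> \<bar>l - T\<bar> \<and> \<bar>l - T\<bar> \<le> max R m} l
            * exp (- c * (\<bar>l - T\<bar> - \<alpha> * m))) \<partial>lborel)"
    unfolding emeasure_expmed_measure[OF ds n r far_borel] by (rule nn_integral_mono)
  also have "\<dots> \<le> ennreal (2 * exp (- c * (R - \<alpha> * m)) / c)"
    using c by (intro nn_integral_exp_two_sided_tail_le) auto
  finally show ?thesis
    using c by (simp add: far_def T_def emeasure_eq_measure ennreal_le_iff)
qed

lemma FAIR_le_dist_Tmed: "n \<ge> 1 \<Longrightarrow> FAIR x n l \<le> \<bar>l - Tmed x n\<bar>"
  unfolding FAIR_def by (subst Max_le_iff) auto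

lemma Vset_FAIR_gt_subset:
  assumes "n \<ge> 1"
  shows "Vset m - {l. FAIR x n l \<le> R} \<subseteq> {l \<in> Vset m. R < \<bar>l - Tmed x n\<bar>}"
proof
  fix l assume l: "l \<in> Vset m - {l. FAIR x n l \<le> R}"
  then have "R < FAIR x n l" by simp
  also have "\<dots> \<le> \<bar>l - Tmed x n\<bar>" by (rule FAIR_le_dist_Tmed[OF assms])
  finally show "l \<in> {l \<in> Vset m. R < \<bar>l - Tmed x n\<bar>}" using l by simp
qed

lemma FAIR_sublevel_borel: "{l. FAIR x n l \<le> R} \<in> sets borel"
proof -
  have "FAIR x n \<in> borel_measurable borel"
    unfolding FAIR_def by (intro borel_measurable_Max) auto
  then show ?thesis by measurable
qed

lemma dpexpmed_prob_ge:
  assumes "is_dataset m n x" "n \<ge> 1" "0 \<le> \<alpha> * m" "0 \<le> \<epsilon>"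
    and G: "G \<in> sets borel" and far: "far \<in> sets borel" "Vset m - G \<subseteq> far"
    and small: "measure (expmed_measure m \<alpha> \<epsilon> x n) far
      \<le> \<beta> * measure (expmed_measure m \<alpha> \<epsilon> x n) (Vset m)"
    and pos: "0 < measure (expmed_measure m \<alpha> \<epsilon> x n) (Vset m)"
  shows "1 - \<beta> \<le> dpexpmed_prob m \<alpha> \<epsilon> x n G"
proof -
  interpret finite_measure "expmed_measure m \<alpha> \<epsilon> x n"
    by (rule finite_measure_expmed_measure[OF assms(1-4)])
  have "measure (expmed_measure m \<alpha> \<epsilon> x n) (Vset m)
      \<le> measure (expmed_measure m \<alpha> \<epsilon> x n) (G \<union> far)"
    using G far by (intro finite_measure_mono) (auto simp: expmed_measure_def)
  also have "\<dots> \<le> measure (expmed_measure m \<alpha> \<epsilon> x n) G + measure (expmed_measure m \<alpha> \<epsilon> x n) far"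
    using G far emeasure_finite by (intro measure_subadditive) (auto simp: expmed_measure_def)
  finally show ?thesis
    using small pos by (simp add: dpexpmed_prob_def field_simps)
qed

lemma exp_tail_arith:
  fixes L c r :: real
  assumes L: "1 < L" and c: "0 < c" and cr: "1 / 6 \<le> c * r" and r: "0 < r"
  shows "2 * exp (- c * (60 * r * L - r)) / c \<le> exp (- L) * r"
proof -
  have inv_c: "1 / c \<le> 6 * r" using cr c by (simp add: field_simps)
  have "(1 / 6) * (60 * L - 1) \<le> (c * r) * (60 * L - 1)"
    using cr L by (intro mult_right_mono) auto
  then have exp_bound: "exp (- c * (60 * r * L - r)) \<le> exp (1 / 6 - 10 * L)"
    by (simp add: algebra_simps)
  have "exp (1 / 6 :: real) \<le> exp 1" by simp
  then have e6: "exp (1 / 6 :: real) \<le> 3" using exp_le by linarith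
  have "(4::real) ^ 3 \<le> exp 3 ^ 3"
    using exp_ge_add_one_self[of 3] by (intro power_mono) auto
  also have "\<dots> = exp 9" by (simp flip: exp_of_nat_mult)
  also have "\<dots> \<le> exp (9 * L)" using L by simp
  finally have e9: "64 \<le> exp (9 * L)" by simp
  have "exp (1 / 6 - 10 * L) * exp (9 * L) = exp ((1 / 6 - 10 * L) + 9 * L)"
    by (simp only: exp_add)
  also have "(1 / 6 - 10 * L) + 9 * L = 1 / 6 + - L" by simp
  also have "exp (1 / 6 + - L) = exp (1 / 6) * exp (- L)" by (rule exp_add)
  finally have "12 * exp (1 / 6 - 10 * L) * exp (9 * L) = 12 * exp (1 / 6) * exp (- L)" by simp
  also have "\<dots> \<le> 64 * exp (- L)" using e6 by simp
  also have "\<dots> \<le> exp (9 * L) * exp (- L)" using e9 by simp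
  finally have "12 * exp (1 / 6 - 10 * L) \<le> exp (- L)" by simp
  then have "2 * exp (1 / 6 - 10 * L) * (6 * r) \<le> exp (- L) * r"
    using r by simp
  moreover have "2 * exp (- c * (60 * r * L - r)) * (1 / c) \<le> 2 * exp (1 / 6 - 10 * L) * (6 * r)"
    using exp_bound inv_c c by (intro mult_mono) auto
  ultimately show ?thesis by simp
qed

lemma one_less_ln_inverse:
  fixes \<beta> :: real
  assumes "0 < \<beta>" "\<beta> < 1 / 3"
  shows "1 < ln (1 / \<beta>)"
proof -
  have "\<beta> * exp 1 \<le> \<beta> * 3" using exp_le assms by (intro mult_left_mono) auto
  then have "\<beta> * exp 1 < 1" using assms by linarith
  then have "exp 1 < 1 / \<beta>" using assms by (simp add: field_simps)
  then have "ln (exp 1) < ln (1 / \<beta>)" using assms by (subst ln_less_cancel_iff) auto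
  then show ?thesis by simp
qed

lemma CTM_dpexpmed_fair:
  fixes m \<beta> \<epsilon> :: real
  assumes m: "0 < m" and \<beta>: "0 < \<beta>" "\<beta> < 1 / 3" and \<epsilon>: "0 < \<epsilon>" "\<epsilon> < 1" and n: "odd n"
    and big: "3 * ln (1 / \<beta>) \<le> real n * \<epsilon>" and ds: "is_dataset m n x" and ctm: "CTM n x"
  shows "1 - \<beta> \<le> dpexpmed_prob m (1 / (real n * \<epsilon>)) \<epsilon> x n
    {l. FAIR x n l \<le> 60 * (m / (real n * \<epsilon>)) * ln (1 / \<beta>)}"
proof -
  define L \<alpha> k where "L = ln (1 / \<beta>)" and "\<alpha> = 1 / (real n * \<epsilon>)" and "k = midx n"
  define r c where "r = \<alpha> * m" and "c = \<epsilon> * real (k - 1) / (2 * m)"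
  define M where "M = expmed_measure m \<alpha> \<epsilon> x n"
  have L: "1 < L" unfolding L_def using \<beta> by (rule one_less_ln_inverse)
  have n\<epsilon>: "3 < real n * \<epsilon>" using big L by (simp add: L_def)
  then have "0 < real n" by (cases n) auto
  then have "real n * \<epsilon> < real n" using \<epsilon>(2) by (simp add: mult_less_cancel_left1)
  then have n3: "3 \<le> n" "3 < real n * \<epsilon>" using n\<epsilon> by linarith+
  have k: "2 \<le> k" "real n / 3 \<le> real (k - 1)" using odd_midx[OF n] n3 by (simp_all add: k_def)
  have r: "0 < r" "r \<le> m / 2" using n3 m by (simp_all add: r_def \<alpha>_def field_simps)
  have c: "0 < c" using \<epsilon> m k by (simp add: c_def)
  have "1 / 6 = (real n / 3) / (2 * real n)" using n3 by simp
  also have "\<dots> \<le> real (k - 1) / (2 * real n)" using k by (intro divide_right_mono) auto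
  also have "\<dots> = c * r" using m \<epsilon> by (simp add: c_def r_def \<alpha>_def)
  finally have cr: "1 / 6 \<le> c * r" .
  have R: "60 * (m / (real n * \<epsilon>)) * ln (1 / \<beta>) = 60 * r * L"
    by (simp add: r_def \<alpha>_def L_def)
  define far where "far = {l \<in> Vset m. 60 * r * L < \<bar>l - Tmed x n\<bar>}"
  have far: "far \<in> sets borel" "Vset m - {l. FAIR x n l \<le> 60 * r * L} \<subseteq> far"
    unfolding far_def using n3 by (simp_all add: Vset_far_borel Vset_FAIR_gt_subset)
  have r_nonneg: "0 \<le> \<alpha> * m" using r by (simp add: r_def)
  have Z: "r \<le> measure M (Vset m)"
    unfolding M_def r_def using r \<epsilon> n3 by (intro expmed_measure_Vset_ge[OF ds]) (auto simp: r_def)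
  have "measure M far \<le> 2 * exp (- c * (60 * r * L - r)) / c"
    unfolding M_def far_def c_def r_def k_def
    by (rule CTM_expmed_measure_far_le[OF ds ctm _ m \<epsilon>(1)]) (use n3 k r_nonneg in \<open>simp_all add: k_def\<close>)
  also have "\<dots> \<le> exp (- L) * r" by (rule exp_tail_arith[OF L c cr r(1)])
  also have "\<dots> = \<beta> * r" using \<beta> by (simp add: L_def exp_minus)
  also have "\<dots> \<le> \<beta> * measure M (Vset m)" using Z \<beta> by simp
  finally have small: "measure M far \<le> \<beta> * measure M (Vset m)" .
  show ?thesis
    unfolding R \<alpha>_def[symmetric] using small Z r n3 \<epsilon>
    by (intro dpexpmed_prob_ge[OF ds _ r_nonneg _ FAIR_sublevel_borel far]) (auto simp: M_def)
qed

theorem theorem7p12: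
  shows "\<exists>C C' :: real. C > 0 \<and> C' > 0 \<and>
    (\<forall>(m::real) (\<beta>::real) (\<epsilon>::real) (n::nat) (x::nat \<Rightarrow> real).
       m > 0 \<longrightarrow> 0 < \<beta> \<longrightarrow> \<beta> < 1/3 \<longrightarrow> 0 < \<epsilon> \<longrightarrow> \<epsilon> < 1 \<longrightarrow>
       odd n \<longrightarrow> real n * \<epsilon> \<ge> C * ln (1 / \<beta>) \<longrightarrow>
       is_dataset m n x \<longrightarrow> CTM n x \<longrightarrow>
       dpexpmed_prob m (1 / (real n * \<epsilon>)) \<epsilon> x n
         {l. FAIR x n l \<le> C' * (m / (real n * \<epsilon>)) * ln (1 / \<beta>)} \<ge> 1 - \<beta>)"
  using CTM_dpexpmed_fair by (intro exI[of _ 3] exI[of _ 60]) auto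

end
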